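(* Let $A=(A,\oplus,\odot)$ be a skew brace, $D$ a cyclic characteristic subgroup of $A_{\oplus}$, and $B=C_{A_{\oplus}}(D)$ the centralizer of $D$ in $A_{\oplus}$. For $x\in A$ denote by $\overline{x}$ the image of $x$ under the natural homomorphism $A_{\oplus}\to A_{\oplus}/B$. Then there exists a positive integer $m$ such that for all $a,b\in A_{\odot}^{(m)}$ the equalities $\overline{a\odot b}=\overline{a\oplus b}$ and $\overline{a^{-1}}=\overline{\ominus a}$ hold.
   Context: A skew brace is a set $A$ with two binary operations $\oplus,\odot$ such that $A_{\oplus}=(A,\oplus)$ and $A_{\odot}=(A,\odot)$ are groups and $a\odot(b\oplus c)=(a\odot b)\ominus a\oplus(a\odot c)$ for all $a,b,c\in A$, where $\ominus a$ is the inverse of $a$ in $A_{\oplus}$ and $a^{-1}$ is the inverse of $a$ in $A_{\odot}$. The derived series of a group $G$ is indexed by $G^{(1)}=G$, $G^{(i+1)}=[G^{(i)},G^{(i)}]$. The subgroup $D$ may be finite or infinite cyclic. *)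

theory Defs
  imports "HOL-Algebra.Algebra"
begin

text \<open>A skew brace: two group structures G (additive, A_plus) and M (multiplicative, A_odot)
  on the same carrier satisfying a(b+c) = ab - a + ac.\<close>
definition skew_brace :: "('a, 'b) monoid_scheme \<Rightarrow> ('a, 'c) monoid_scheme \<Rightarrow> bool" where
  "skew_brace G M \<longleftrightarrow> group G \<and> group M \<and> carrier M = carrier G \<and>
     (\<forall>a\<in>carrier G. \<forall>b\<in>carrier G. \<forall>c\<in>carrier G.
        a \<otimes>\<^bsub>M\<^esub> (b \<otimes>\<^bsub>G\<^esub> c)
        = (a \<otimes>\<^bsub>M\<^esub> b) \<otimes>\<^bsub>G\<^esub> inv\<^bsub>G\<^esub> a \<otimes>\<^bsub>G\<^esub> (a \<otimes>\<^bsub>M\<^esub> c))"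

definition characteristic_subgroup :: "'a set \<Rightarrow> ('a, 'b) monoid_scheme \<Rightarrow> bool" where
  "characteristic_subgroup H G \<longleftrightarrow> subgroup H G \<and> (\<forall>f \<in> iso G G. f ` H = H)"

definition centralizer :: "('a, 'b) monoid_scheme \<Rightarrow> 'a set \<Rightarrow> 'a set" where
  "centralizer G H = {x \<in> carrier G. \<forall>h\<in>H. x \<otimes>\<^bsub>G\<^esub> h = h \<otimes>\<^bsub>G\<^esub> x}"

text \<open>Derived series indexed from 1: G^(1) = G, G^(i+1) = [G^(i), G^(i)].\<close>
definition derived_term :: "('a, 'b) monoid_scheme \<Rightarrow> nat \<Rightarrow> 'a set" where
  "derived_term G i = (derived G ^^ (i - 1)) (carrier G)"

end

theory Submission
  imports Defs
begin

text \<open>Write \<open>a \<odot> b = a \<oplus> \<lambda>\<^sub>a(b)\<close>. Then \<open>a \<mapsto> \<lambda>\<^sub>a\<close> is an action of \<open>A\<^sub>\<odot>\<close> on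
  \<open>A\<^sub>\<oplus>\<close> by automorphisms, so it preserves the characteristic subgroup \<open>D\<close>. As \<open>D\<close> is
  cyclic, its endomorphisms commute, hence the commutator subgroup of \<open>A\<^sub>\<odot>\<close> acts
  trivially on \<open>D\<close>. If \<open>\<lambda>\<^sub>a\<close> fixes the normal subgroup \<open>D\<close> pointwise, it commutes with
  conjugation into \<open>D\<close>, so \<open>\<ominus>b \<oplus> \<lambda>\<^sub>a(b)\<close> centralizes \<open>D\<close>; this gives
  \<open>a \<odot> b \<in> (a \<oplus> b) \<oplus> B\<close>, and \<open>\<lambda>\<^sub>a(a\<^sup>-\<^sup>1) = \<ominus>a\<close> gives \<open>a\<^sup>-\<^sup>1 \<in> \<ominus>a \<oplus> B\<close>.
  So \<open>m = 2\<close> works.\<close>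

lemma (in group) inv_mult_cancel_left [simp]:
  "x \<in> carrier G \<Longrightarrow> y \<in> carrier G \<Longrightarrow> inv x \<otimes> (x \<otimes> y) = y"
  by (simp add: m_assoc [symmetric])

lemma (in group) mult_inv_cancel_left [simp]:
  "x \<in> carrier G \<Longrightarrow> y \<in> carrier G \<Longrightarrow> x \<otimes> (inv x \<otimes> y) = y"
  by (simp add: m_assoc [symmetric])

lemma (in group) conjugation_iso:
  assumes "g \<in> carrier G"
  shows "(\<lambda>h. g \<otimes> h \<otimes> inv g) \<in> iso G G"
  using conjugation_is_bij [OF assms] assms
  by (auto simp: iso_def m_assoc intro!: homI)

lemma (in group) characteristic_subgroup_imp_normal:
  assumes "characteristic_subgroup D G"
  shows "D \<lhd> G"
  using assms conjugation_iso unfolding characteristic_subgroup_def normal_inv_iff by blast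

lemma (in group) centralizer_subgroup:
  assumes "H \<subseteq> carrier G"
  shows "subgroup (centralizer G H) G"
proof (rule subgroupI)
  show "centralizer G H \<subseteq> carrier G" by (auto simp: centralizer_def)
  have "\<one> \<in> centralizer G H" using assms by (auto simp: centralizer_def)
  then show "centralizer G H \<noteq> {}" by blast
next
  fix a assume a: "a \<in> centralizer G H"
  have "inv a \<otimes> h = h \<otimes> inv a" if h: "h \<in> H" for h
  proof -
    have hc: "h \<in> carrier G" and ac: "a \<in> carrier G" and "a \<otimes> h = h \<otimes> a"
      using a h assms by (auto simp: centralizer_def)
    then have "inv a \<otimes> (h \<otimes> a) \<otimes> inv a = inv a \<otimes> (a \<otimes> h) \<otimes> inv a" by simp
    with hc ac show ?thesis by (simp add: m_assoc)
  qed
  with a show "inv a \<in> centralizer G H" by (simp add: centralizer_def)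
next
  fix a b assume a: "a \<in> centralizer G H" and b: "b \<in> centralizer G H"
  have "a \<otimes> b \<otimes> h = h \<otimes> (a \<otimes> b)" if h: "h \<in> H" for h
  proof -
    have hc: "h \<in> carrier G" and ac: "a \<in> carrier G" and bc: "b \<in> carrier G"
      and ah: "a \<otimes> h = h \<otimes> a" and bh: "b \<otimes> h = h \<otimes> b"
      using a b h assms by (auto simp: centralizer_def)
    have "a \<otimes> b \<otimes> h = a \<otimes> (h \<otimes> b)" using ac bc hc by (simp add: m_assoc bh)
    also have "\<dots> = h \<otimes> (a \<otimes> b)" using ac bc hc by (simp add: m_assoc [symmetric] ah)
    finally show ?thesis .
  qed
  with a b show "a \<otimes> b \<in> centralizer G H" by (simp add: centralizer_def)
qed

lemma (in group) centralizer_normal: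
  assumes "H \<lhd> G"
  shows "centralizer G H \<lhd> G"
  unfolding normal_inv_iff
proof (intro conjI ballI)
  have Hc: "H \<subseteq> carrier G" using assms normal_imp_subgroup subgroup.subset by blast
  then show "subgroup (centralizer G H) G" by (rule centralizer_subgroup)
  fix x c assume x: "x \<in> carrier G" and c: "c \<in> centralizer G H"
  have cc: "c \<in> carrier G" using c by (simp add: centralizer_def)
  have "x \<otimes> c \<otimes> inv x \<otimes> d = d \<otimes> (x \<otimes> c \<otimes> inv x)" if d: "d \<in> H" for d
  proof -
    have dc: "d \<in> carrier G" using d Hc by blast
    have "inv x \<otimes> d \<otimes> x \<in> H" using normal.inv_op_closed1 [OF assms x d] .
    then have comm: "c \<otimes> (inv x \<otimes> d \<otimes> x) = (inv x \<otimes> d \<otimes> x) \<otimes> c"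
      using c by (simp add: centralizer_def)
    have "x \<otimes> c \<otimes> inv x \<otimes> d = x \<otimes> (c \<otimes> (inv x \<otimes> d \<otimes> x)) \<otimes> inv x"
      using x cc dc by (simp add: m_assoc)
    also have "\<dots> = x \<otimes> ((inv x \<otimes> d \<otimes> x) \<otimes> c) \<otimes> inv x"
      by (simp only: comm)
    also have "\<dots> = d \<otimes> (x \<otimes> c \<otimes> inv x)"
      using x cc dc by (simp add: m_assoc)
    finally show ?thesis .
  qed
  with x cc show "x \<otimes> c \<otimes> inv x \<in> centralizer G H" by (simp add: centralizer_def)
qed

lemma (in group) inv_mult_endomorphism_in_centralizer:
  assumes H: "H \<lhd> G" and f: "f \<in> hom G G" and fix_H: "\<And>h. h \<in> H \<Longrightarrow> f h = h"
    and b: "b \<in> carrier G"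
  shows "inv b \<otimes> f b \<in> centralizer G H"
proof -
  have Hc: "H \<subseteq> carrier G" using H normal_imp_subgroup subgroup.subset by blast
  have fb: "f b \<in> carrier G" using f b by (simp add: hom_in_carrier)
  have "inv b \<otimes> f b \<otimes> d = d \<otimes> (inv b \<otimes> f b)" if d: "d \<in> H" for d
  proof -
    define d' where "d' = b \<otimes> d \<otimes> inv b"
    have d': "d' \<in> H" using normal.inv_op_closed2 [OF H b d] by (simp add: d'_def)
    have dc: "d \<in> carrier G" and d'c: "d' \<in> carrier G" using d d' Hc by auto
    have "f b \<otimes> d = f (b \<otimes> d)" using f b dc fix_H [OF d] by (simp add: hom_mult)
    also have "\<dots> = f (d' \<otimes> b)" using b dc by (simp add: d'_def m_assoc)
    also have "\<dots> = d' \<otimes> f b" using f b d'c fix_H [OF d'] by (simp add: hom_mult)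
    finally have "f b \<otimes> d = d' \<otimes> f b" .
    then show ?thesis using b fb dc by (simp add: d'_def m_assoc)
  qed
  with b fb show ?thesis by (simp add: centralizer_def)
qed

lemma (in normal) rcos_mult_eq:
  assumes x: "x \<in> carrier G" and c: "c \<in> H"
  shows "H #> (x \<otimes> c) = H #> x"
proof -
  have cc: "c \<in> carrier G" using mem_carrier [OF c] .
  have "x \<otimes> c = (x \<otimes> c \<otimes> inv x) \<otimes> x" using x cc by (simp add: m_assoc)
  also have "\<dots> \<in> H #> x" using inv_op_closed2 [OF x c] x by (intro rcosI) auto
  finally have "x \<otimes> c \<in> H #> x" .
  then show ?thesis using repr_independence [OF _ x is_subgroup] by simp
qed

lemma (in group) cyclic_subgroup_powers:
  assumes H: "subgroup H G" and cyclic: "cyclic_group (subgroup_generated G H)"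
  obtains x where "x \<in> carrier G" "H = range (\<lambda>n::int. x [^] n)"
proof -
  have carrier_H: "carrier (subgroup_generated G H) = H"
    by (rule subgroup.carrier_subgroup_generated_subgroup [OF H])
  obtain x where x: "x \<in> H" and "H = range (\<lambda>n::int. x [^]\<^bsub>subgroup_generated G H\<^esub> n)"
    using cyclic group.cyclic_group [OF group_subgroup_generated] carrier_H by auto
  then have "H = range (\<lambda>n::int. x [^] n)"
    using int_pow_subgroup_generated carrier_H by simp
  moreover have "x \<in> carrier G" using subgroup.mem_carrier [OF H x] .
  ultimately show ?thesis using that by blast
qed

text \<open>An endomorphism preserving a cyclic subgroup acts on it as a power map
  \<open>y \<mapsto> y [^] k\<close>, and power maps commute.\<close>
lemma (in group) endomorphisms_commute_on_cyclic_subgroup: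
  assumes x: "x \<in> carrier G" and H: "H = range (\<lambda>n::int. x [^] n)"
    and f: "f \<in> hom G G" "f ` H \<subseteq> H" and g: "g \<in> hom G G" "g ` H \<subseteq> H"
    and d: "d \<in> H"
  shows "f (g d) = g (f d)"
proof -
  have pow: "h (y [^] n) = h y [^] n" if "h \<in> hom G G" "y \<in> carrier G" for h y and n :: int
    using hom_int_pow [OF that(1) _ is_group is_group] that(2) by blast
  have "x \<in> H" unfolding H by (metis int_pow_1 [OF x] rangeI)
  then have "f x \<in> H" "g x \<in> H" using f g by auto
  then obtain k l where k: "f x = x [^] (k::int)" and l: "g x = x [^] (l::int)"
    unfolding H by blast
  obtain n where n: "d = x [^] (n::int)" using d unfolding H by blast
  have "f (g d) = x [^] (k * (l * n))" using f g x by (simp add: n pow k l int_pow_pow)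
  also have "\<dots> = x [^] (l * (k * n))" by (simp add: algebra_simps)
  also have "\<dots> = g (f d)" using f g x by (simp add: n pow k l int_pow_pow)
  finally show ?thesis .
qed

locale skew_brace_structure = G: group G + M: group M
  for G :: "('a, 'b) monoid_scheme" and M :: "('a, 'c) monoid_scheme" +
  assumes carrier_eq: "carrier M = carrier G"
    and brace_distrib: "\<lbrakk>a \<in> carrier G; b \<in> carrier G; c \<in> carrier G\<rbrakk> \<Longrightarrow>
      a \<otimes>\<^bsub>M\<^esub> (b \<otimes>\<^bsub>G\<^esub> c) = (a \<otimes>\<^bsub>M\<^esub> b) \<otimes>\<^bsub>G\<^esub> inv\<^bsub>G\<^esub> a \<otimes>\<^bsub>G\<^esub> (a \<otimes>\<^bsub>M\<^esub> c)"

lemma skew_brace_structureI: "skew_brace G M \<Longrightarrow> skew_brace_structure G M"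
  unfolding skew_brace_def
  by (auto intro!: skew_brace_structure.intro skew_brace_structure_axioms.intro)

context skew_brace_structure
begin

definition lam :: "'a \<Rightarrow> 'a \<Rightarrow> 'a"
  where "lam a b = inv\<^bsub>G\<^esub> a \<otimes>\<^bsub>G\<^esub> (a \<otimes>\<^bsub>M\<^esub> b)"

lemma M_mult_closed [simp]: "a \<in> carrier G \<Longrightarrow> b \<in> carrier G \<Longrightarrow> a \<otimes>\<^bsub>M\<^esub> b \<in> carrier G"
  using M.m_closed carrier_eq by auto

lemma M_inv_closed [simp]: "a \<in> carrier G \<Longrightarrow> inv\<^bsub>M\<^esub> a \<in> carrier G"
  using M.inv_closed carrier_eq by auto

lemma lam_closed [simp]: "a \<in> carrier G \<Longrightarrow> b \<in> carrier G \<Longrightarrow> lam a b \<in> carrier G"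
  by (simp add: lam_def)

lemma one_eq: "\<one>\<^bsub>M\<^esub> = \<one>\<^bsub>G\<^esub>"
proof -
  define y where "y = \<one>\<^bsub>G\<^esub> \<otimes>\<^bsub>M\<^esub> \<one>\<^bsub>G\<^esub>"
  have y: "y \<in> carrier G" by (simp add: y_def)
  have "y \<otimes>\<^bsub>G\<^esub> \<one>\<^bsub>G\<^esub> = y \<otimes>\<^bsub>G\<^esub> y"
    using brace_distrib [of "\<one>\<^bsub>G\<^esub>" "\<one>\<^bsub>G\<^esub>" "\<one>\<^bsub>G\<^esub>"] y by (simp add: y_def)
  then have "y = \<one>\<^bsub>G\<^esub>" using y by (simp add: G.l_cancel)
  then have "\<one>\<^bsub>G\<^esub> \<otimes>\<^bsub>M\<^esub> \<one>\<^bsub>G\<^esub> = \<one>\<^bsub>G\<^esub> \<otimes>\<^bsub>M\<^esub> \<one>\<^bsub>M\<^esub>"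
    using carrier_eq by (simp add: y_def)
  then show ?thesis using carrier_eq by (simp add: M.l_cancel)
qed

lemma M_mult_eq_lam: "a \<in> carrier G \<Longrightarrow> b \<in> carrier G \<Longrightarrow> a \<otimes>\<^bsub>M\<^esub> b = a \<otimes>\<^bsub>G\<^esub> lam a b"
  by (simp add: lam_def G.m_assoc [symmetric])

lemma lam_mult:
  "\<lbrakk>a \<in> carrier G; b \<in> carrier G; c \<in> carrier G\<rbrakk> \<Longrightarrow>
    lam a (b \<otimes>\<^bsub>G\<^esub> c) = lam a b \<otimes>\<^bsub>G\<^esub> lam a c"
  by (simp add: lam_def brace_distrib G.m_assoc)

lemma lam_one: "c \<in> carrier G \<Longrightarrow> lam \<one>\<^bsub>G\<^esub> c = c"
  using M.l_one [of c] carrier_eq by (simp add: lam_def one_eq)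

lemma lam_comp:
  assumes a: "a \<in> carrier G" and b: "b \<in> carrier G" and c: "c \<in> carrier G"
  shows "lam (a \<otimes>\<^bsub>M\<^esub> b) c = lam a (lam b c)"
proof -
  have "(a \<otimes>\<^bsub>M\<^esub> b) \<otimes>\<^bsub>M\<^esub> c = a \<otimes>\<^bsub>M\<^esub> (b \<otimes>\<^bsub>G\<^esub> lam b c)"
    using a b c carrier_eq by (simp add: M.m_assoc M_mult_eq_lam [of b c])
  also have "\<dots> = (a \<otimes>\<^bsub>M\<^esub> b) \<otimes>\<^bsub>G\<^esub> inv\<^bsub>G\<^esub> a \<otimes>\<^bsub>G\<^esub> (a \<otimes>\<^bsub>M\<^esub> lam b c)"
    using a b c by (simp add: brace_distrib)
  also have "\<dots> = (a \<otimes>\<^bsub>M\<^esub> b) \<otimes>\<^bsub>G\<^esub> lam a (lam b c)"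
    using a b c by (simp add: lam_def G.m_assoc)
  finally show ?thesis using a b c by (simp add: lam_def)
qed

lemma lam_inv_comp: "a \<in> carrier G \<Longrightarrow> c \<in> carrier G \<Longrightarrow> lam (inv\<^bsub>M\<^esub> a) (lam a c) = c"
  using carrier_eq by (simp add: lam_comp [symmetric] one_eq lam_one)

lemma lam_comp_inv: "a \<in> carrier G \<Longrightarrow> c \<in> carrier G \<Longrightarrow> lam a (lam (inv\<^bsub>M\<^esub> a) c) = c"
  using carrier_eq by (simp add: lam_comp [symmetric] one_eq lam_one)

lemma lam_hom: "a \<in> carrier G \<Longrightarrow> lam a \<in> hom G G"
  by (rule homI) (simp_all add: lam_mult)

lemma lam_iso: "a \<in> carrier G \<Longrightarrow> lam a \<in> iso G G"
  unfolding iso_def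
  by (auto simp: lam_hom lam_inv_comp lam_comp_inv
      intro!: bij_betw_byWitness [where f' = "lam (inv\<^bsub>M\<^esub> a)"])

lemma lam_M_inv: "a \<in> carrier G \<Longrightarrow> lam a (inv\<^bsub>M\<^esub> a) = inv\<^bsub>G\<^esub> a"
  using carrier_eq by (simp add: lam_def one_eq)

definition lam_kernel :: "'a set \<Rightarrow> 'a set"
  where "lam_kernel D = {a \<in> carrier G. \<forall>d \<in> D. lam a d = d}"

lemma subgroup_lam_kernel:
  assumes D: "D \<subseteq> carrier G"
  shows "subgroup (lam_kernel D) M"
proof (rule M.subgroupI)
  show "lam_kernel D \<subseteq> carrier M" using carrier_eq by (auto simp: lam_kernel_def)
  have "\<one>\<^bsub>M\<^esub> \<in> lam_kernel D" using D by (auto simp: lam_kernel_def one_eq lam_one)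
  then show "lam_kernel D \<noteq> {}" by blast
next
  fix a assume "a \<in> lam_kernel D"
  then have a: "a \<in> carrier G" and fixed: "\<And>d. d \<in> D \<Longrightarrow> lam a d = d"
    by (auto simp: lam_kernel_def)
  have "lam (inv\<^bsub>M\<^esub> a) d = d" if d: "d \<in> D" for d
    using lam_inv_comp [OF a, of d] fixed [OF d] D d by auto
  with a show "inv\<^bsub>M\<^esub> a \<in> lam_kernel D" by (simp add: lam_kernel_def)
next
  fix a b assume "a \<in> lam_kernel D" "b \<in> lam_kernel D"
  with D show "a \<otimes>\<^bsub>M\<^esub> b \<in> lam_kernel D" by (auto simp: lam_kernel_def lam_comp)
qed

lemma lam_commute_on_cyclic:
  assumes char: "characteristic_subgroup D G" and cyclic: "cyclic_group (subgroup_generated G D)"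
    and a: "a \<in> carrier G" and b: "b \<in> carrier G" and d: "d \<in> D"
  shows "lam a (lam b d) = lam b (lam a d)"
proof -
  have D: "subgroup D G" using char by (simp add: characteristic_subgroup_def)
  obtain x where x: "x \<in> carrier G" and Dx: "D = range (\<lambda>n::int. x [^]\<^bsub>G\<^esub> n)"
    using G.cyclic_subgroup_powers [OF D cyclic] .
  have "lam a ` D \<subseteq> D" "lam b ` D \<subseteq> D"
    using char lam_iso a b by (auto simp: characteristic_subgroup_def)
  then show ?thesis
    using G.endomorphisms_commute_on_cyclic_subgroup [OF x Dx lam_hom [OF a] _ lam_hom [OF b] _ d]
    by blast
qed

text \<open>The \<open>\<lambda>\<close>-action of \<open>M\<close> on \<open>D\<close> factors through the abelian group \<open>Aut D\<close>, so
  commutators act trivially.\<close>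
lemma derived_subset_lam_kernel:
  assumes char: "characteristic_subgroup D G" and cyclic: "cyclic_group (subgroup_generated G D)"
  shows "derived M (carrier M) \<subseteq> lam_kernel D"
  unfolding derived_def
proof (rule M.generate_subgroup_incl [OF _ subgroup_lam_kernel])
  show D: "D \<subseteq> carrier G"
    using char by (simp add: characteristic_subgroup_def subgroup.subset)
  show "derived_set M (carrier M) \<subseteq> lam_kernel D"
  proof clarify
    fix a b assume "a \<in> carrier M" "b \<in> carrier M"
    then have a: "a \<in> carrier G" and b: "b \<in> carrier G" using carrier_eq by auto
    let ?a' = "inv\<^bsub>M\<^esub> a" and ?b' = "inv\<^bsub>M\<^esub> b"
    have "lam (a \<otimes>\<^bsub>M\<^esub> b \<otimes>\<^bsub>M\<^esub> ?a' \<otimes>\<^bsub>M\<^esub> ?b') d = d" if d: "d \<in> D" for d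
    proof -
      have dc: "d \<in> carrier G" and b'd: "lam ?b' d \<in> D"
        using d D char lam_iso [OF M_inv_closed [OF b]] by (auto simp: characteristic_subgroup_def)
      have "lam (a \<otimes>\<^bsub>M\<^esub> b \<otimes>\<^bsub>M\<^esub> ?a' \<otimes>\<^bsub>M\<^esub> ?b') d = lam a (lam b (lam ?a' (lam ?b' d)))"
        using a b dc by (simp add: lam_comp)
      also have "\<dots> = lam a (lam ?a' (lam b (lam ?b' d)))"
        using lam_commute_on_cyclic [OF char cyclic _ b b'd] a by simp
      also have "\<dots> = d"
        using a b dc by (simp add: lam_comp_inv)
      finally show ?thesis .
    qed
    with a b show "a \<otimes>\<^bsub>M\<^esub> b \<otimes>\<^bsub>M\<^esub> inv\<^bsub>M\<^esub> a \<otimes>\<^bsub>M\<^esub> inv\<^bsub>M\<^esub> b \<in> lam_kernel D"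
      by (simp add: lam_kernel_def)
  qed
qed

lemma lam_kernel_displacement_in_centralizer:
  assumes D: "D \<lhd> G" and a: "a \<in> lam_kernel D" and y: "y \<in> carrier G"
  shows "inv\<^bsub>G\<^esub> y \<otimes>\<^bsub>G\<^esub> lam a y \<in> centralizer G D"
  using a G.inv_mult_endomorphism_in_centralizer [OF D lam_hom _ y] by (simp add: lam_kernel_def)

lemma centralizer_rcos_M_mult:
  assumes D: "D \<lhd> G" and a: "a \<in> lam_kernel D" and b: "b \<in> carrier G"
  shows "centralizer G D #>\<^bsub>G\<^esub> (a \<otimes>\<^bsub>M\<^esub> b) = centralizer G D #>\<^bsub>G\<^esub> (a \<otimes>\<^bsub>G\<^esub> b)"
proof -
  interpret B: normal "centralizer G D" G using G.centralizer_normal [OF D] .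
  have ac: "a \<in> carrier G" using a by (simp add: lam_kernel_def)
  have "a \<otimes>\<^bsub>M\<^esub> b = (a \<otimes>\<^bsub>G\<^esub> b) \<otimes>\<^bsub>G\<^esub> (inv\<^bsub>G\<^esub> b \<otimes>\<^bsub>G\<^esub> lam a b)"
    using ac b by (simp add: M_mult_eq_lam G.m_assoc)
  then show ?thesis
    using B.rcos_mult_eq [OF _ lam_kernel_displacement_in_centralizer [OF D a b]] ac b by simp
qed

lemma centralizer_rcos_M_inv:
  assumes D: "D \<lhd> G" and a: "a \<in> lam_kernel D"
  shows "centralizer G D #>\<^bsub>G\<^esub> (inv\<^bsub>M\<^esub> a) = centralizer G D #>\<^bsub>G\<^esub> (inv\<^bsub>G\<^esub> a)"
proof -
  interpret B: normal "centralizer G D" G using G.centralizer_normal [OF D] .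
  have ac: "a \<in> carrier G" and a': "inv\<^bsub>M\<^esub> a \<in> carrier G" using a by (simp_all add: lam_kernel_def)
  have "centralizer G D #>\<^bsub>G\<^esub> (inv\<^bsub>M\<^esub> a) = centralizer G D #>\<^bsub>G\<^esub>
      (inv\<^bsub>M\<^esub> a \<otimes>\<^bsub>G\<^esub> (inv\<^bsub>G\<^esub> (inv\<^bsub>M\<^esub> a) \<otimes>\<^bsub>G\<^esub> lam a (inv\<^bsub>M\<^esub> a)))"
    using a' by (intro B.rcos_mult_eq [symmetric] lam_kernel_displacement_in_centralizer [OF D a])
  also have "\<dots> = centralizer G D #>\<^bsub>G\<^esub> (inv\<^bsub>G\<^esub> a)"
    using ac by (simp add: lam_M_inv)
  finally show ?thesis .
qed

end

theorem proposition4p4: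
  fixes G :: "('a, 'b) monoid_scheme" and M :: "('a, 'c) monoid_scheme" and D :: "'a set"
  assumes "skew_brace G M"
    and "characteristic_subgroup D G"
    and "cyclic_group (subgroup_generated G D)"
  shows "\<exists>m::nat. m > 0 \<and>
     (\<forall>a \<in> derived_term M m. \<forall>b \<in> derived_term M m.
        centralizer G D #>\<^bsub>G\<^esub> (a \<otimes>\<^bsub>M\<^esub> b) = centralizer G D #>\<^bsub>G\<^esub> (a \<otimes>\<^bsub>G\<^esub> b)
      \<and> centralizer G D #>\<^bsub>G\<^esub> (inv\<^bsub>M\<^esub> a) = centralizer G D #>\<^bsub>G\<^esub> (inv\<^bsub>G\<^esub> a))"
proof (intro exI [of _ 2] conjI ballI)
  interpret skew_brace_structure G M using assms(1) by (rule skew_brace_structureI)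
  have D: "D \<lhd> G" using assms(2) by (rule G.characteristic_subgroup_imp_normal)
  have derived: "derived_term M 2 \<subseteq> lam_kernel D"
    using derived_subset_lam_kernel [OF assms(2,3)] by (simp add: derived_term_def)
  fix a b assume "a \<in> derived_term M 2" "b \<in> derived_term M 2"
  then have a: "a \<in> lam_kernel D" and b: "b \<in> carrier G"
    using derived by (auto simp: lam_kernel_def)
  show "centralizer G D #>\<^bsub>G\<^esub> (a \<otimes>\<^bsub>M\<^esub> b) = centralizer G D #>\<^bsub>G\<^esub> (a \<otimes>\<^bsub>G\<^esub> b)"
    using centralizer_rcos_M_mult [OF D a b] .
  show "centralizer G D #>\<^bsub>G\<^esub> (inv\<^bsub>M\<^esub> a) = centralizer G D #>\<^bsub>G\<^esub> (inv\<^bsub>G\<^esub> a)"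
    using centralizer_rcos_M_inv [OF D a] .
qed simp

end
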